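(* Let $q$ be a prime power and let $n,k$ be integers with $3\le k\le\frac{n-2}{2}$, $n\le q$ and $k\le q-2$. Let $\alpha_1,\dots,\alpha_n\in\mathbb{F}_q$ be pairwise distinct and let $C_{k,k}$ be the linear code generated by the $k\times n$ matrix whose rows are $(\alpha_1^{e},\dots,\alpha_n^{e})$ for $e=0,1,\dots,k-2$ and $e=k$. If $C_{k,k}$ is an MDS code, then it is a non-GRS MDS code.
   Context: Convention: $0^0=1$. A linear code is MDS if its parameters $[n,k,d]$ satisfy $d=n-k+1$. For pairwise distinct $a_1,\dots,a_n\in\mathbb{F}_q$ and $w\in(\mathbb{F}_q^* )^n$, $GRS(n,k,\{a_i\},w)=\{(w_1f(a_1),\dots,w_nf(a_n)) : f\in\mathbb{F}_q[x],\ \deg f\le k-1\}$. Two codes are (monomially) equivalent if one is obtained from the other by permuting coordinates and scaling coordinates by nonzero scalars. A non-GRS MDS code is an MDS code not equivalent to any GRS code. *)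

theory Defs
  imports "HOL-Computational_Algebra.Polynomial" "HOL-Combinatorics.Permutations" "HOL-Library.Cardinality"
begin

text \<open>Words of length n over a finite field are modelled as functions nat => 'a
  that vanish outside the index set {..<n}. A code of length n is a set of such words.\<close>

definition is_word :: "nat \<Rightarrow> (nat \<Rightarrow> 'a::zero) \<Rightarrow> bool" where
  "is_word n w \<longleftrightarrow> (\<forall>j\<ge>n. w j = 0)"

definition linear_code :: "nat \<Rightarrow> (nat \<Rightarrow> 'a::field) set \<Rightarrow> bool" where
  "linear_code n C \<longleftrightarrow> (\<forall>w\<in>C. is_word n w) \<and> (\<lambda>_. 0) \<in> C \<and>
     (\<forall>u\<in>C. \<forall>v\<in>C. (\<lambda>j. u j + v j) \<in> C) \<and> (\<forall>c. \<forall>u\<in>C. (\<lambda>j. c * u j) \<in> C)"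

definition weight :: "nat \<Rightarrow> (nat \<Rightarrow> 'a::zero) \<Rightarrow> nat" where
  "weight n w = card {j. j < n \<and> w j \<noteq> 0}"

definition min_dist :: "nat \<Rightarrow> (nat \<Rightarrow> 'a::zero) set \<Rightarrow> nat" where
  "min_dist n C = Min (weight n ` (C - {\<lambda>_. 0}))"

definition code_dim :: "(nat \<Rightarrow> 'a::{finite,field}) set \<Rightarrow> nat \<Rightarrow> bool" where
  "code_dim C k \<longleftrightarrow> card C = CARD('a) ^ k"

definition MDS :: "nat \<Rightarrow> (nat \<Rightarrow> 'a::{finite,field}) set \<Rightarrow> bool" where
  "MDS n C \<longleftrightarrow> linear_code n C \<and> (\<exists>k. code_dim C k \<and> min_dist n C = n - k + 1)"

definition GRS :: "nat \<Rightarrow> nat \<Rightarrow> (nat \<Rightarrow> 'a::field) \<Rightarrow> (nat \<Rightarrow> 'a) \<Rightarrow> (nat \<Rightarrow> 'a) set" where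
  "GRS n k a w = {(\<lambda>j. if j < n then w j * poly f (a j) else 0) | f. degree f \<le> k - 1}"

definition is_GRS_code :: "nat \<Rightarrow> (nat \<Rightarrow> 'a::field) set \<Rightarrow> bool" where
  "is_GRS_code n D \<longleftrightarrow> (\<exists>k a w. 1 \<le> k \<and> inj_on a {..<n} \<and> (\<forall>j<n. w j \<noteq> 0) \<and> D = GRS n k a w)"

definition mono_image :: "nat \<Rightarrow> (nat \<Rightarrow> 'a::field) set \<Rightarrow> (nat \<Rightarrow> 'a) set \<Rightarrow> bool" where
  "mono_image n C D \<longleftrightarrow> (\<exists>\<sigma> s. \<sigma> permutes {..<n} \<and> (\<forall>j<n. s j \<noteq> 0) \<and>
      D = (\<lambda>c j. if j < n then s j * c (\<sigma> j) else 0) ` C)"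

definition code_equiv :: "nat \<Rightarrow> (nat \<Rightarrow> 'a::field) set \<Rightarrow> (nat \<Rightarrow> 'a) set \<Rightarrow> bool" where
  "code_equiv n C D \<longleftrightarrow> mono_image n C D \<or> mono_image n D C"

definition non_GRS_MDS :: "nat \<Rightarrow> (nat \<Rightarrow> 'a::{finite,field}) set \<Rightarrow> bool" where
  "non_GRS_MDS n C \<longleftrightarrow> MDS n C \<and> \<not> (\<exists>D. is_GRS_code n D \<and> code_equiv n C D)"

definition gen_code_exps :: "nat \<Rightarrow> (nat \<Rightarrow> 'a::field) \<Rightarrow> nat set \<Rightarrow> (nat \<Rightarrow> 'a) set" where
  "gen_code_exps n \<alpha> E = {(\<lambda>j. if j < n then (\<Sum>e\<in>E. c e * \<alpha> j ^ e) else 0) | c. True}"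

definition C_kk :: "nat \<Rightarrow> nat \<Rightarrow> (nat \<Rightarrow> 'a::field) \<Rightarrow> (nat \<Rightarrow> 'a) set" where
  "C_kk n k \<alpha> = gen_code_exps n \<alpha> ({0..k-2} \<union> {k})"

end

theory Submission
  imports Defs
begin

text \<open>If C_kk were GRS(n, k') with nodes a and weights w, counting codewords would force
  k' \<le> k, so each row (\<alpha>_j^e), e \<in> E = {0..k-2} \<union> {k}, would be (w_j f_e(a_j)) with
  deg f_e \<le> k - 1. Products of two rows are then (w_j^2 h(a_j)) with deg h \<le> 2k - 2, so the
  rows (\<alpha>_j^s), s \<in> E + E, span a space of dimension at most 2k - 1. But E + E =
  {0..2k-2} \<union> {2k} has 2k elements, all below n, and rows of distinct powers evaluated at n
  distinct points are linearly independent. Monomial equivalence maps GRS codes to GRS codes in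
  both directions, so C_kk is not even equivalent to a GRS code.\<close>

lemma CARD_ge_2: "2 \<le> CARD('a::{finite,zero_neq_one})"
proof -
  have "card {0::'a, 1} \<le> CARD('a)" by (rule card_mono) auto
  then show ?thesis by simp
qed

lemma bij_betw_sum_monom_degree_le:
  "bij_betw (\<lambda>c. \<Sum>i\<le>m. monom (c i) i) (PiE {..m} (\<lambda>_. UNIV))
     {p :: 'a::comm_monoid_add poly. degree p \<le> m}"
proof (rule bij_betw_imageI)
  let ?f = "\<lambda>c :: nat \<Rightarrow> 'a. \<Sum>i\<le>m. monom (c i) i"
  show "inj_on ?f (PiE {..m} (\<lambda>_. UNIV))"
  proof (rule inj_onI)
    fix c d
    assume c: "c \<in> PiE {..m} (\<lambda>_. UNIV)" and d: "d \<in> PiE {..m} (\<lambda>_. UNIV)" and eq: "?f c = ?f d"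
    show "c = d"
    proof
      fix i
      show "c i = d i"
      proof (cases "i \<le> m")
        case True
        then show ?thesis using arg_cong[OF eq, of "\<lambda>p. coeff p i"] by (simp add: coeff_sum)
      next
        case False
        then show ?thesis using c d by (metis PiE_arb atMost_iff)
      qed
    qed
  qed
  show "?f ` PiE {..m} (\<lambda>_. UNIV) = {p. degree p \<le> m}"
  proof
    show "?f ` PiE {..m} (\<lambda>_. UNIV) \<subseteq> {p. degree p \<le> m}"
      by (auto intro!: degree_sum_le le_trans[OF degree_monom_le])
    show "{p. degree p \<le> m} \<subseteq> ?f ` PiE {..m} (\<lambda>_. UNIV)"
    proof
      fix p :: "'a poly"
      assume "p \<in> {p. degree p \<le> m}"
      then have "p = ?f (restrict (coeff p) {..m})"
        by (simp add: poly_as_sum_of_monoms')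
      then show "p \<in> ?f ` PiE {..m} (\<lambda>_. UNIV)"
        by (rule image_eqI[where x = "restrict (coeff p) {..m}"]) simp
    qed
  qed
qed

lemma card_degree_le:
  "card {p :: 'a::{finite,comm_monoid_add} poly. degree p \<le> m} = CARD('a) ^ Suc m"
  using bij_betw_same_card[OF bij_betw_sum_monom_degree_le[where 'a='a]] by (simp add: card_PiE)

lemma finite_degree_le: "finite {p :: 'a::{finite,comm_monoid_add} poly. degree p \<le> m}"
  using bij_betw_finite[OF bij_betw_sum_monom_degree_le[where 'a='a]] by (simp add: finite_PiE)

lemma nontrivial_relation_degree_le:
  fixes h :: "'b \<Rightarrow> 'a::{finite,comm_ring_1} poly"
  assumes fin: "finite S" and card: "Suc m < card S" and deg: "\<forall>s\<in>S. degree (h s) \<le> m"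
  shows "\<exists>c. (\<exists>s\<in>S. c s \<noteq> 0) \<and> (\<Sum>s\<in>S. smult (c s) (h s)) = 0"
proof -
  define F where "F = (\<lambda>c. \<Sum>s\<in>S. smult (c s) (h s))"
  define A where "A = PiE S (\<lambda>_. UNIV :: 'a set)"
  have "F ` A \<subseteq> {p. degree p \<le> m}"
    using deg fin by (auto simp: F_def intro!: degree_sum_le le_trans[OF degree_smult_le])
  then have "card (F ` A) \<le> card {p :: 'a poly. degree p \<le> m}"
    by (rule card_mono[OF finite_degree_le])
  also have "\<dots> = CARD('a) ^ Suc m" by (rule card_degree_le)
  also have "\<dots> < CARD('a) ^ card S"
    using CARD_ge_2[where 'a='a] card by (intro power_strict_increasing) auto
  also have "\<dots> = card A" by (simp add: A_def card_PiE fin)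
  finally have "\<not> inj_on F A" using card_image by fastforce
  then obtain c d where cd: "c \<in> A" "d \<in> A" "c \<noteq> d" "F c = F d"
    unfolding inj_on_def by blast
  have "\<exists>s\<in>S. c s \<noteq> d s"
  proof (rule ccontr)
    assume "\<not> (\<exists>s\<in>S. c s \<noteq> d s)"
    then have "c = d" using cd(1,2) unfolding A_def by (intro PiE_ext) auto
    then show False using cd(3) by contradiction
  qed
  then have "\<exists>s\<in>S. c s - d s \<noteq> 0" by simp
  moreover have "(\<Sum>s\<in>S. smult (c s - d s) (h s)) = 0"
    using cd(4) by (simp add: F_def smult_diff_left sum_subtractf)
  ultimately show ?thesis by (intro exI[of _ "\<lambda>s. c s - d s"] conjI)
qed

lemma coeff_eq_0_if_vanishes_on_distinct_points:
  fixes \<beta> :: "nat \<Rightarrow> 'a::{comm_ring_1,ring_no_zero_divisors}"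
  assumes fin: "finite S" and lt: "\<forall>s\<in>S. s < n" and inj: "inj_on \<beta> {..<n}"
    and vanish: "\<forall>j<n. (\<Sum>s\<in>S. c s * \<beta> j ^ s) = 0" and t: "t \<in> S"
  shows "c t = 0"
proof -
  define p where "p = (\<Sum>s\<in>S. monom (c s) s)"
  have "p = 0"
  proof (rule poly_eqI_degree[where A = "\<beta> ` {..<n}"])
    show "poly p x = poly 0 x" if "x \<in> \<beta> ` {..<n}" for x
      using that vanish by (auto simp: p_def poly_sum poly_monom)
    have "degree p < n"
      unfolding p_def using lt t by (intro degree_sum_less) (auto intro: le_less_trans[OF degree_monom_le])
    then show "degree p < card (\<beta> ` {..<n})" "degree 0 < card (\<beta> ` {..<n})"
      by (simp_all add: card_image[OF inj])
  qed
  then have "coeff p t = 0" by simp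
  then show ?thesis using fin t by (simp add: p_def coeff_sum coeff_monom)
qed

lemma GRS_eq_image:
  "GRS n k a w = (\<lambda>f j. if j < n then w j * poly f (a j) else 0) ` {f. degree f \<le> k - 1}"
  unfolding GRS_def by blast

lemma finite_GRS: "finite (GRS n k a (w :: nat \<Rightarrow> 'a::{finite,field}))"
  unfolding GRS_eq_image by (intro finite_imageI finite_degree_le)

lemma GRS_mono: "k \<le> k' \<Longrightarrow> GRS n k a w \<subseteq> GRS n k' a w"
  unfolding GRS_def by fastforce

lemma card_GRS:
  fixes w :: "nat \<Rightarrow> 'a::{finite,field}"
  assumes k: "1 \<le> k" "k \<le> n" and a: "inj_on a {..<n}" and w: "\<forall>j<n. w j \<noteq> 0"
  shows "card (GRS n k a w) = CARD('a) ^ k"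
proof -
  have "inj_on (\<lambda>f j. if j < n then w j * poly f (a j) else 0) {f. degree f \<le> k - 1}"
  proof (rule inj_onI)
    fix f g
    assume f: "f \<in> {f. degree f \<le> k - 1}" and g: "g \<in> {f. degree f \<le> k - 1}"
      and eq: "(\<lambda>j. if j < n then w j * poly f (a j) else 0) = (\<lambda>j. if j < n then w j * poly g (a j) else 0)"
    show "f = g"
    proof (rule poly_eqI_degree[where A = "a ` {..<n}"])
      show "poly f x = poly g x" if "x \<in> a ` {..<n}" for x
      proof -
        from that obtain j where j: "j < n" "x = a j" by auto
        then show ?thesis using fun_cong[OF eq, of j] w by simp
      qed
      show "degree f < card (a ` {..<n})" "degree g < card (a ` {..<n})"
        using f g k by (simp_all add: card_image[OF a])
    qed
  qed
  then show ?thesis using k by (simp add: GRS_eq_image card_image card_degree_le)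
qed

lemma power_row_mem_gen_code_exps:
  assumes "finite E" "e \<in> E"
  shows "(\<lambda>j. if j < n then \<alpha> j ^ e else 0) \<in> gen_code_exps n \<alpha> E"
proof -
  have select: "(\<Sum>e'\<in>E. of_bool (e' = e) * \<alpha> j ^ e') = \<alpha> j ^ e" for j
    using assms by (simp add: of_bool_def if_distrib[of "\<lambda>x. x * _"] cong: if_cong)
  show ?thesis
    unfolding gen_code_exps_def by (intro CollectI exI[of _ "\<lambda>e'. of_bool (e' = e)"]) (simp only: select)
qed

lemma card_gen_code_exps_le:
  fixes \<alpha> :: "nat \<Rightarrow> 'a::{finite,field}"
  assumes fin: "finite E"
  shows "card (gen_code_exps n \<alpha> E) \<le> CARD('a) ^ card E"
proof -
  let ?G = "\<lambda>c j. if j < n then \<Sum>e\<in>E. c e * \<alpha> j ^ e else 0"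
  have "?G c \<in> ?G ` PiE E (\<lambda>_. UNIV)" for c
    by (rule image_eqI[of _ _ "restrict c E"]) (auto intro!: sum.cong)
  then have "gen_code_exps n \<alpha> E = ?G ` PiE E (\<lambda>_. UNIV)"
    unfolding gen_code_exps_def by blast
  then have "card (gen_code_exps n \<alpha> E) \<le> card (PiE E (\<lambda>_. UNIV :: 'a set))"
    by (simp add: card_image_le finite_PiE fin)
  then show ?thesis by (simp add: card_PiE fin)
qed

lemma card_sumset_le_if_power_rows_GRS:
  fixes \<beta> :: "nat \<Rightarrow> 'a::{finite,field}"
  assumes fin: "finite E" and inj: "inj_on \<beta> {..<n}" and lt: "\<forall>e\<in>E. \<forall>e'\<in>E. e + e' < n"
    and rows: "\<forall>e\<in>E. \<exists>f. degree f \<le> m \<and> (\<forall>j<n. \<beta> j ^ e = w j * poly f (a j))"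
  shows "card {e + e' |e e'. e \<in> E \<and> e' \<in> E} \<le> 2 * m + 1"
proof (rule ccontr)
  define S where "S = {e + e' |e e'. e \<in> E \<and> e' \<in> E}"
  assume "\<not> card {e + e' |e e'. e \<in> E \<and> e' \<in> E} \<le> 2 * m + 1"
  then have card: "Suc (2 * m) < card S" by (simp add: S_def)
  have finS: "finite S" using fin by (simp add: S_def finite_image_set2)
  have "\<exists>h. degree h \<le> 2 * m \<and> (\<forall>j<n. \<beta> j ^ s = w j ^ 2 * poly h (a j))" if "s \<in> S" for s
  proof -
    from that obtain e e' where e: "e \<in> E" "e' \<in> E" "s = e + e'" by (auto simp: S_def)
    obtain f f' where "degree f \<le> m" "\<forall>j<n. \<beta> j ^ e = w j * poly f (a j)"
      and "degree f' \<le> m" "\<forall>j<n. \<beta> j ^ e' = w j * poly f' (a j)"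
      using rows e(1,2) by meson
    then show ?thesis using e(3) degree_mult_le[of f f']
      by (intro exI[of _ "f * f'"]) (simp add: power_add power2_eq_square algebra_simps)
  qed
  then obtain H where H: "\<forall>s\<in>S. degree (H s) \<le> 2 * m \<and> (\<forall>j<n. \<beta> j ^ s = w j ^ 2 * poly (H s) (a j))"
    by metis
  obtain c where c: "\<exists>s\<in>S. c s \<noteq> 0" "(\<Sum>s\<in>S. smult (c s) (H s)) = 0"
    using nontrivial_relation_degree_le[OF finS card] H by blast
  have "(\<Sum>s\<in>S. c s * \<beta> j ^ s) = 0" if "j < n" for j
  proof -
    have "(\<Sum>s\<in>S. c s * \<beta> j ^ s) = (\<Sum>s\<in>S. c s * (w j ^ 2 * poly (H s) (a j)))"
      using H that by (intro sum.cong) auto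
    also have "\<dots> = w j ^ 2 * poly (\<Sum>s\<in>S. smult (c s) (H s)) (a j)"
      by (simp add: poly_sum sum_distrib_left algebra_simps)
    finally show ?thesis using c(2) by simp
  qed
  moreover have "\<forall>s\<in>S. s < n" using lt by (auto simp: S_def)
  ultimately have "\<forall>s\<in>S. c s = 0"
    using coeff_eq_0_if_vanishes_on_distinct_points[OF finS _ inj] by blast
  then show False using c(1) by blast
qed

lemma sumset_C_kk_exponents:
  fixes k :: nat
  assumes "3 \<le> k"
  shows "{e + e' |e e'. e \<in> {0..k-2} \<union> {k} \<and> e' \<in> {0..k-2} \<union> {k}} = {0..2*k-2} \<union> {2*k}"
proof
  show "{e + e' |e e'. e \<in> {0..k-2} \<union> {k} \<and> e' \<in> {0..k-2} \<union> {k}} \<subseteq> {0..2*k-2} \<union> {2*k}"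
    using assms by auto
  show "{0..2*k-2} \<union> {2*k} \<subseteq> {e + e' |e e'. e \<in> {0..k-2} \<union> {k} \<and> e' \<in> {0..k-2} \<union> {k}}"
  proof
    fix s assume s: "s \<in> {0..2*k-2} \<union> {2*k}"
    consider "s \<le> 2*k-4" | "2*k-4 < s" "s \<le> 2*k-2" | "s = 2*k" using s by force
    then show "s \<in> {e + e' |e e'. e \<in> {0..k-2} \<union> {k} \<and> e' \<in> {0..k-2} \<union> {k}}"
    proof cases
      case 1
      then show ?thesis by (intro CollectI exI[of _ "min s (k-2)"] exI[of _ "s - min s (k-2)"]) auto
    next
      case 2
      then show ?thesis using assms by (intro CollectI exI[of _ "s - k"] exI[of _ k]) auto
    next
      case 3
      then show ?thesis by (intro CollectI exI[of _ k] exI[of _ k]) auto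
    qed
  qed
qed

lemma C_kk_not_GRS:
  fixes \<alpha> :: "nat \<Rightarrow> 'a::{finite,field}"
  assumes k: "3 \<le> k" "2 * k < n" and inj: "inj_on \<alpha> {..<n}"
  shows "\<not> is_GRS_code n (C_kk n k \<alpha>)"
proof
  define E where "E = {0..k-2} \<union> {k}"
  have finE: "finite E" and cardE: "card E = k" using k by (auto simp: E_def)
  have Ckk: "C_kk n k \<alpha> = gen_code_exps n \<alpha> E" by (simp add: C_kk_def E_def)
  assume "is_GRS_code n (C_kk n k \<alpha>)"
  then obtain k' a w where GRS: "C_kk n k \<alpha> = GRS n k' a w"
    and a: "inj_on a {..<n}" and w: "\<forall>j<n. w j \<noteq> 0"
    unfolding is_GRS_code_def by blast
  have "k' \<le> k"
  proof (rule ccontr)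
    assume "\<not> k' \<le> k"
    have "CARD('a) ^ Suc k = card (GRS n (Suc k) a w)" using k a w by (simp add: card_GRS)
    also have "\<dots> \<le> card (GRS n k' a w)"
      using \<open>\<not> k' \<le> k\<close> by (intro card_mono finite_GRS GRS_mono) simp
    also have "\<dots> \<le> CARD('a) ^ k"
      using card_gen_code_exps_le[OF finE, of n \<alpha>] GRS Ckk cardE by simp
    finally show False using CARD_ge_2[where 'a='a] by simp
  qed
  have "\<forall>e\<in>E. \<exists>f. degree f \<le> k - 1 \<and> (\<forall>j<n. \<alpha> j ^ e = w j * poly f (a j))"
  proof
    fix e assume "e \<in> E"
    then have "(\<lambda>j. if j < n then \<alpha> j ^ e else 0) \<in> GRS n k' a w"
      unfolding GRS[symmetric] Ckk by (rule power_row_mem_gen_code_exps[OF finE])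
    then obtain f where "degree f \<le> k' - 1"
      and "(\<lambda>j. if j < n then \<alpha> j ^ e else 0) = (\<lambda>j. if j < n then w j * poly f (a j) else 0)"
      unfolding GRS_def by blast
    then show "\<exists>f. degree f \<le> k - 1 \<and> (\<forall>j<n. \<alpha> j ^ e = w j * poly f (a j))"
      using \<open>k' \<le> k\<close> by (intro exI[of _ f]) (metis diff_le_mono le_trans)
  qed
  then have "card {e + e' |e e'. e \<in> E \<and> e' \<in> E} \<le> 2 * (k - 1) + 1"
    using k by (intro card_sumset_le_if_power_rows_GRS[OF finE inj]) (auto simp: E_def)
  moreover have "card {e + e' |e e'. e \<in> E \<and> e' \<in> E} = 2 * k"
    unfolding E_def sumset_C_kk_exponents[OF k(1)] using k(1) by simp
  ultimately show False using k by linarith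
qed

definition monomial_map :: "nat \<Rightarrow> (nat \<Rightarrow> nat) \<Rightarrow> (nat \<Rightarrow> 'a::field) \<Rightarrow> (nat \<Rightarrow> 'a) \<Rightarrow> nat \<Rightarrow> 'a" where
  "monomial_map n \<sigma> s = (\<lambda>c j. if j < n then s j * c (\<sigma> j) else 0)"

lemma mono_image_iff:
  "mono_image n C D \<longleftrightarrow>
     (\<exists>\<sigma> s. \<sigma> permutes {..<n} \<and> (\<forall>j<n. s j \<noteq> 0) \<and> D = monomial_map n \<sigma> s ` C)"
  by (simp add: mono_image_def monomial_map_def)

lemma monomial_map_inverse:
  assumes \<sigma>: "\<sigma> permutes {..<n}" and s: "\<forall>j<n. s j \<noteq> 0" and c: "is_word n c"
  shows "monomial_map n (inv \<sigma>) (\<lambda>j. inverse (s (inv \<sigma> j))) (monomial_map n \<sigma> s c) = c"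
proof
  fix j
  show "monomial_map n (inv \<sigma>) (\<lambda>j. inverse (s (inv \<sigma> j))) (monomial_map n \<sigma> s c) j = c j"
  proof (cases "j < n")
    case True
    then have "inv \<sigma> j < n" using permutes_in_image[OF permutes_inv[OF \<sigma>]] by simp
    then show ?thesis using True s by (simp add: monomial_map_def permutes_inverses(1)[OF \<sigma>])
  next
    case False
    then show ?thesis using c by (simp add: monomial_map_def is_word_def)
  qed
qed

lemma mono_image_sym:
  assumes words: "\<forall>c\<in>C. is_word n c" and "mono_image n C D"
  shows "mono_image n D C"
proof -
  obtain \<sigma> s where \<sigma>: "\<sigma> permutes {..<n}" and s: "\<forall>j<n. s j \<noteq> 0"
    and D: "D = monomial_map n \<sigma> s ` C"
    using assms(2) unfolding mono_image_iff by blast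
  have "monomial_map n (inv \<sigma>) (\<lambda>j. inverse (s (inv \<sigma> j))) ` D = id ` C"
    unfolding D image_image using monomial_map_inverse[OF \<sigma> s] words by (intro image_cong) auto
  then have "C = monomial_map n (inv \<sigma>) (\<lambda>j. inverse (s (inv \<sigma> j))) ` D" by simp
  moreover have "\<forall>j<n. inverse (s (inv \<sigma> j)) \<noteq> 0"
    using s permutes_in_image[OF permutes_inv[OF \<sigma>]] by simp
  ultimately show ?thesis
    unfolding mono_image_iff
    by (intro exI[of _ "inv \<sigma>"] exI[of _ "\<lambda>j. inverse (s (inv \<sigma> j))"] conjI permutes_inv[OF \<sigma>])
qed

lemma monomial_map_GRS:
  assumes "\<sigma> permutes {..<n}"
  shows "monomial_map n \<sigma> s ` GRS n k a w = GRS n k (a \<circ> \<sigma>) (\<lambda>j. s j * w (\<sigma> j))"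
proof -
  have "monomial_map n \<sigma> s (\<lambda>j. if j < n then w j * poly f (a j) else 0)
      = (\<lambda>j. if j < n then s j * w (\<sigma> j) * poly f ((a \<circ> \<sigma>) j) else 0)" for f
    using permutes_in_image[OF assms] by (auto simp: monomial_map_def fun_eq_iff)
  then show ?thesis unfolding GRS_eq_image image_image by simp
qed

lemma mono_image_GRS:
  assumes "is_GRS_code n D" and "mono_image n D C"
  shows "is_GRS_code n C"
proof -
  obtain k a w where k: "1 \<le> k" and a: "inj_on a {..<n}" and w: "\<forall>j<n. w j \<noteq> 0"
    and D: "D = GRS n k a w"
    using assms(1) unfolding is_GRS_code_def by blast
  obtain \<sigma> s where \<sigma>: "\<sigma> permutes {..<n}" and s: "\<forall>j<n. s j \<noteq> 0"
    and C: "C = monomial_map n \<sigma> s ` D"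
    using assms(2) unfolding mono_image_iff by blast
  have "inj_on (a \<circ> \<sigma>) {..<n}"
    using comp_inj_on[OF permutes_inj_on[OF \<sigma>]] a permutes_image[OF \<sigma>] by metis
  moreover have "\<forall>j<n. s j * w (\<sigma> j) \<noteq> 0" using s w permutes_in_image[OF \<sigma>] by simp
  ultimately show ?thesis
    unfolding is_GRS_code_def C D monomial_map_GRS[OF \<sigma>]
    using k by (intro exI[of _ k] exI[of _ "a \<circ> \<sigma>"] exI[of _ "\<lambda>j. s j * w (\<sigma> j)"] conjI refl)
qed

lemma code_equiv_GRS_imp_GRS:
  assumes "\<forall>c\<in>C. is_word n c" and "code_equiv n C D" and "is_GRS_code n D"
  shows "is_GRS_code n C"
  using assms mono_image_sym mono_image_GRS unfolding code_equiv_def by blast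

theorem proposition4p3:
  fixes \<alpha> :: "nat \<Rightarrow> 'a::{finite,field}" and n k :: nat
  assumes "3 \<le> k" and "2 * k \<le> n - 2" and "n \<le> CARD('a)" and "k \<le> CARD('a) - 2"
    and "inj_on \<alpha> {..<n}"
    and "MDS n (C_kk n k \<alpha>)"
  shows "non_GRS_MDS n (C_kk n k \<alpha>)"
proof -
  have words: "\<forall>c\<in>C_kk n k \<alpha>. is_word n c"
    using assms(6) unfolding MDS_def linear_code_def by blast
  have "\<not> is_GRS_code n (C_kk n k \<alpha>)"
    using assms(1,2,5) by (intro C_kk_not_GRS) auto
  then show ?thesis
    using assms(6) code_equiv_GRS_imp_GRS[OF words] unfolding non_GRS_MDS_def by blast
qed

end
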